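(* In the setting of the Causal Complementation Theorem (with $\hat a\ne 0$, $\hat d\ge 0$, $F_0,F_1$ causal not both zero with $\gcd(F_0,F_1)=z^{-d_F}$, $0\le d_F\le\hat d$, $0\le M\le \hat d-d_F$, $\ell$ such that $\widetilde F_\ell=z^{d_F}F_\ell$ is left-justified, and $(R_0,R_1)$ the unique causal complement to $(F_0,F_1)$ for $\hat a z^{-\hat d}$ that is degree-reducing modulo $M$ in $F_\ell$), let $k>0$ be an integer and suppose $z^{-(M+k)}\mid R_\ell$. Then, with $\ell'=1-\ell$, we have $z^{-(M+k)}\mid R_{\ell'}$ if and only if $\hat{d}-d_F\geq M+k$.
   Context: A causal filter is a polynomial in $z^{-1}$ with complex coefficients; $\deg$ denotes degree in $z^{-1}$; divisibility and gcd are in $\mathbb{C}[z^{-1}]$. A causal filter $F$ is left-justified if its constant term is nonzero. $(R_0,R_1)$ is a causal complement to $(F_0,F_1)$ for $\hat{a}z^{-\hat{d}}$ if $R_0,R_1$ are causal and $F_0R_1-F_1R_0=\hat{a}z^{-\hat{d}}$; it is degree-reducing modulo $M$ in $F_\ell$ if $z^{-M}$ divides both $R_0,R_1$ and $\deg(R_\ell)<\deg(F_\ell)-\deg\gcd(F_0,F_1)+M$. *)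

theory Defs
  imports "HOL-Computational_Algebra.Computational_Algebra" "HOL-Computational_Algebra.Field_as_Ring"
begin

text \<open>A causal filter is a polynomial in z^-1; we use the variable X of complex poly
  to stand for z^-1, so z^-n is monom 1 n.\<close>

definition left_justified :: "complex poly \<Rightarrow> bool" where
  "left_justified F \<longleftrightarrow> coeff F 0 \<noteq> 0"

definition causal_complement ::
  "complex poly \<Rightarrow> complex poly \<Rightarrow> complex poly \<Rightarrow> complex poly \<Rightarrow> complex \<Rightarrow> nat \<Rightarrow> bool" where
  "causal_complement F0 F1 R0 R1 a d \<longleftrightarrow> F0 * R1 - F1 * R0 = smult a (monom 1 d)"

text \<open>Degree-reducing modulo M in F_l (filters indexed by l in {0,1});
  deg 0 is read as minus infinity, so R_l = 0 always satisfies the degree bound.\<close>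
definition degree_reducing ::
  "(nat \<Rightarrow> complex poly) \<Rightarrow> (nat \<Rightarrow> complex poly) \<Rightarrow> nat \<Rightarrow> nat \<Rightarrow> bool" where
  "degree_reducing F R M l \<longleftrightarrow>
     monom 1 M dvd R 0 \<and> monom 1 M dvd R 1 \<and>
     (R l = 0 \<or> int (degree (R l)) < int (degree (F l)) - int (degree (gcd (F 0) (F 1))) + int M)"

end

theory Submission
  imports Defs
begin

text \<open>Dividing out the common factor z^-dF turns the complement equation into
  G0 R1 - G1 R0 = a z^-(dhat - dF) with G\<ell> left-justified. If z^-n divides R\<ell>, this equation
  reads \<pm>G\<ell> R\<ell>' = a z^-(dhat - dF) modulo z^-n; since G\<ell> has nonzero constant term it is
  invertible modulo z^-n, so z^-n divides R\<ell>' exactly when it divides z^-(dhat - dF), that is,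
  when n \<le> dhat - dF.\<close>

lemma monom_1_dvd_mult_cancel_left:
  fixes G R :: "'a::idom poly"
  assumes "coeff G 0 \<noteq> 0" and "monom 1 n dvd G * R"
  shows "monom 1 n dvd R"
proof (cases "R = 0")
  case False
  have "G \<noteq> 0" using assms(1) by auto
  have "poly G 0 \<noteq> 0" using assms(1) by (simp add: poly_0_coeff_0)
  then have "order 0 G = 0" by (simp add: order_root)
  have "n \<le> order 0 (G * R)"
    using assms(2) \<open>G \<noteq> 0\<close> False by (simp add: monom_1_dvd_iff)
  also have "\<dots> = order 0 R"
    using \<open>G \<noteq> 0\<close> False \<open>order 0 G = 0\<close> by (simp add: order_mult)
  finally show ?thesis using False by (simp add: monom_1_dvd_iff)
qed simp

lemma monom_1_dvd_smult_monom_iff: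
  fixes c :: "'a::idom"
  assumes "c \<noteq> 0"
  shows "monom 1 n dvd smult c (monom 1 D) \<longleftrightarrow> n \<le> D"
proof
  assume "monom 1 n dvd smult c (monom 1 D)"
  then have "\<forall>k<n. coeff (smult c (monom 1 D)) k = 0" by (simp add: monom_1_dvd_iff')
  moreover have "coeff (smult c (monom 1 D)) D \<noteq> 0" using assms by simp
  ultimately show "n \<le> D" by (meson not_le)
qed (simp add: monom_1_dvd_iff')

lemma complement_monom_dvd_iff:
  fixes G0 G1 R0 R1 :: "'a::idom poly"
  assumes eq: "G0 * R1 - G1 * R0 = smult c (monom 1 D)"
    and "c \<noteq> 0" and "coeff G0 0 \<noteq> 0" and "monom 1 n dvd R0"
  shows "monom 1 n dvd R1 \<longleftrightarrow> n \<le> D"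
proof -
  have "monom 1 n dvd R1 \<longleftrightarrow> monom 1 n dvd G0 * R1"
    using monom_1_dvd_mult_cancel_left[OF \<open>coeff G0 0 \<noteq> 0\<close>] by (blast intro: dvd_mult)
  also have "\<dots> \<longleftrightarrow> monom 1 n dvd G0 * R1 - G1 * R0"
    using \<open>monom 1 n dvd R0\<close> by (intro dvd_diff_left_iff[symmetric] dvd_mult)
  also have "\<dots> \<longleftrightarrow> n \<le> D"
    unfolding eq using \<open>c \<noteq> 0\<close> by (rule monom_1_dvd_smult_monom_iff)
  finally show ?thesis .
qed

lemma complement_div_common_monom:
  fixes F0 F1 R0 R1 :: "'a::field poly"
  assumes "F0 * R1 - F1 * R0 = smult c (monom 1 D)"
    and "monom 1 e dvd F0" and "monom 1 e dvd F1" and "e \<le> D"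
  shows "(F0 div monom 1 e) * R1 - (F1 div monom 1 e) * R0 = smult c (monom 1 (D - e))"
proof -
  have "monom (1::'a) D = monom 1 e * monom 1 (D - e)"
    using \<open>e \<le> D\<close> by (simp add: mult_monom)
  with assms(1-3) have "monom 1 e * ((F0 div monom 1 e) * R1 - (F1 div monom 1 e) * R0)
      = monom 1 e * smult c (monom 1 (D - e))"
    by (simp add: algebra_simps)
  then show ?thesis by (subst (asm) mult_left_cancel) (auto simp: monom_eq_0_iff)
qed

theorem mainTheorem4:
  fixes F R :: "nat \<Rightarrow> complex poly" and a :: complex and dhat dF M l k :: nat
  assumes "a \<noteq> 0"
    and "F 0 \<noteq> 0 \<or> F 1 \<noteq> 0"
    and "gcd (F 0) (F 1) = monom 1 dF"
    and "dF \<le> dhat"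
    and "M \<le> dhat - dF"
    and "l \<le> 1"
    and "left_justified (F l div monom 1 dF)"
    and "causal_complement (F 0) (F 1) (R 0) (R 1) a dhat"
    and "degree_reducing F R M l"
    and "k > 0"
    and "monom 1 (M + k) dvd R l"
  shows "monom 1 (M + k) dvd R (1 - l) \<longleftrightarrow> dhat - dF \<ge> M + k"
proof -
  define G where "G i = F i div monom 1 dF" for i
  have eq: "G 0 * R 1 - G 1 * R 0 = smult a (monom 1 (dhat - dF))"
    unfolding G_def using assms(4,8)
    by (intro complement_div_common_monom)
      (auto simp: causal_complement_def simp flip: assms(3))
  have "coeff (G l) 0 \<noteq> 0" using assms(7) by (simp add: G_def left_justified_def)
  consider "l = 0" | "l = 1" using \<open>l \<le> 1\<close> by linarith
  then show ?thesis
  proof cases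
    case 1
    with complement_monom_dvd_iff[OF eq assms(1)] show ?thesis
      using \<open>coeff (G l) 0 \<noteq> 0\<close> assms(11) by simp
  next
    case 2
    from eq have eq': "G 1 * R 0 - G 0 * R 1 = smult (- a) (monom 1 (dhat - dF))"
      by (metis minus_diff_eq smult_minus_left)
    from 2 complement_monom_dvd_iff[OF eq'] show ?thesis
      using \<open>coeff (G l) 0 \<noteq> 0\<close> assms(1,11) by simp
  qed
qed

end
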